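(* Let $\psi$ be an existential formula in the first-order language with equality over one binary relation symbol $R$, using only the variables $x,y,z$. Let $v:\{x,y,z\}\to Q$ and $w:\{x,y,z\}\to P$ be alike assignments. If $(Q,T)\models\psi[v]$ then $(P,Z)\models\psi[w]$.
   Context: $(P,Z)$: $P=\{0,1,2,3,4\}$, $Z=\{(i,j): i<5,\ j\equiv i\pm1 \pmod 5\}$. $(Q,T)$: $Q=\{0,1,2,3\}$, $T=\{(i,j): i<4,\ j\equiv i\pm1 \pmod 4\}$. An existential formula is one built from atomic formulas ($Ruv$ or $u=v$) and negations of atomic formulas using only conjunction, disjunction and existential quantification; "using only the variables $x,y,z$" means every variable occurring, free or bound, is among $x,y,z$. Assignments $v$ into $Q$ and $w$ into $P$ are alike if the map sending $v(u)\mapsto w(u)$ for $u\in\{x,y,z\}$ is a well-defined bijection from the range of $v$ onto the range of $w$ which is an isomorphism between the induced substructures of $(Q,T)$ and $(P,Z)$ on these ranges. *)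

theory Defs
  imports Main
begin

datatype var = Vx | Vy | Vz

datatype efm =
    Rel var var
  | Eq var var
  | NRel var var
  | NEq var var
  | Conj efm efm
  | Disj efm efm
  | Ex var efm

fun sat :: "'a set \<Rightarrow> ('a \<Rightarrow> 'a \<Rightarrow> bool) \<Rightarrow> efm \<Rightarrow> (var \<Rightarrow> 'a) \<Rightarrow> bool" where
  "sat D R (Rel u u') v = R (v u) (v u')"
| "sat D R (Eq u u') v = (v u = v u')"
| "sat D R (NRel u u') v = (\<not> R (v u) (v u'))"
| "sat D R (NEq u u') v = (v u \<noteq> v u')"
| "sat D R (Conj a b) v = (sat D R a v \<and> sat D R b v)"
| "sat D R (Disj a b) v = (sat D R a v \<or> sat D R b v)"
| "sat D R (Ex u a) v = (\<exists>d\<in>D. sat D R a (v(u := d)))"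

definition P :: "nat set" where "P = {0,1,2,3,4}"
definition Zr :: "nat \<Rightarrow> nat \<Rightarrow> bool" where
  "Zr i j \<longleftrightarrow> i < 5 \<and> j < 5 \<and> (j mod 5 = (i + 1) mod 5 \<or> (j + 1) mod 5 = i mod 5)"

definition Q :: "nat set" where "Q = {0,1,2,3}"
definition Tr :: "nat \<Rightarrow> nat \<Rightarrow> bool" where
  "Tr i j \<longleftrightarrow> i < 4 \<and> j < 4 \<and> (j mod 4 = (i + 1) mod 4 \<or> (j + 1) mod 4 = i mod 4)"

definition alike :: "(var \<Rightarrow> nat) \<Rightarrow> (var \<Rightarrow> nat) \<Rightarrow> bool" where
  "alike v w \<longleftrightarrow> (\<exists>f. (\<forall>u. f (v u) = w u) \<and> bij_betw f (range v) (range w) \<and>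
     (\<forall>a\<in>range v. \<forall>b\<in>range v. Tr a b \<longleftrightarrow> Zr (f a) (f b)))"

end

theory Submission
  imports Defs
begin

text \<open>An existential formula is preserved from (Q,T) to (P,Z) as soon as Duplicator can answer
every move of Spoiler in the existential pebble game with three pebbles: whenever the pebbled
tuples have the same atomic type, any new element of Q placed on one variable can be matched by
an element of P keeping the types equal. Since only the two other pebbles constrain the answer, it
suffices that every element of the 4-cycle can be matched against any two pebbled points of the
5-cycle with the same atomic type, which is a finite check.\<close>

definition same_atomic_type ::
    "('a \<Rightarrow> 'a \<Rightarrow> bool) \<Rightarrow> ('b \<Rightarrow> 'b \<Rightarrow> bool) \<Rightarrow> (var \<Rightarrow> 'a) \<Rightarrow> (var \<Rightarrow> 'b) \<Rightarrow> bool" where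
  "same_atomic_type R S v w \<longleftrightarrow>
     (\<forall>u u'. (v u = v u' \<longleftrightarrow> w u = w u') \<and> (R (v u) (v u') \<longleftrightarrow> S (w u) (w u')))"

lemma sat_transfer:
  assumes forth: "\<And>v w u d. same_atomic_type R S v w \<Longrightarrow> range v \<subseteq> A \<Longrightarrow> range w \<subseteq> B \<Longrightarrow>
      d \<in> A \<Longrightarrow> \<exists>e\<in>B. same_atomic_type R S (v(u := d)) (w(u := e))"
    and "sat A R \<psi> v" "same_atomic_type R S v w" "range v \<subseteq> A" "range w \<subseteq> B"
  shows "sat B S \<psi> w"
  using assms(2-)
proof (induction \<psi> arbitrary: v w)
  case (Ex u \<phi>)
  then obtain d where d: "d \<in> A" "sat A R \<phi> (v(u := d))" by auto
  with forth Ex.prems obtain e where e: "e \<in> B" "same_atomic_type R S (v(u := d)) (w(u := e))"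
    by blast
  have "range (v(u := d)) \<subseteq> A" "range (w(u := e)) \<subseteq> B"
    using d(1) e(1) Ex.prems(3,4) by auto
  then have "sat B S \<phi> (w(u := e))"
    using Ex.IH[OF d(2) e(2)] by blast
  with e(1) show ?case by auto
qed (auto simp: same_atomic_type_def)

lemma var_cover_by_two_others: "\<exists>u1 u2. \<forall>x. x = (u :: var) \<or> x = u1 \<or> x = u2"
  by (metis var.exhaust)

text \<open>With three variables a move leaves two pebbles in place, and for symmetric irreflexive
relations the new atomic type is determined by equalities and edges to those two points.\<close>
lemma forth_from_two_point_extension:
  assumes "symp R" "irreflp R" "symp S" "irreflp S"
    and ext: "\<And>a b a' b' d. a \<in> A \<Longrightarrow> b \<in> A \<Longrightarrow> a' \<in> B \<Longrightarrow> b' \<in> B \<Longrightarrow>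
      (a = b \<longleftrightarrow> a' = b') \<Longrightarrow> (R a b \<longleftrightarrow> S a' b') \<Longrightarrow> d \<in> A \<Longrightarrow>
      \<exists>e\<in>B. (d = a \<longleftrightarrow> e = a') \<and> (d = b \<longleftrightarrow> e = b') \<and> (R d a \<longleftrightarrow> S e a') \<and> (R d b \<longleftrightarrow> S e b')"
    and vw: "same_atomic_type R S v w" "range v \<subseteq> A" "range w \<subseteq> B" "d \<in> A"
  shows "\<exists>e\<in>B. same_atomic_type R S (v(u := d)) (w(u := e))"
proof -
  obtain u1 u2 where u: "\<And>x. x = u \<or> x = u1 \<or> x = u2"
    using var_cover_by_two_others by blast
  have ab: "v u1 = v u2 \<longleftrightarrow> w u1 = w u2" "R (v u1) (v u2) \<longleftrightarrow> S (w u1) (w u2)"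
    using vw(1) unfolding same_atomic_type_def by auto
  have "v u1 \<in> A" "v u2 \<in> A" "w u1 \<in> B" "w u2 \<in> B"
    using vw(2,3) by auto
  then obtain e where e: "e \<in> B"
      "d = v u1 \<longleftrightarrow> e = w u1" "d = v u2 \<longleftrightarrow> e = w u2"
      "R d (v u1) \<longleftrightarrow> S e (w u1)" "R d (v u2) \<longleftrightarrow> S e (w u2)"
    using ext[OF _ _ _ _ ab vw(4)] by blast
  have new_vs_old: "(d = v y \<longleftrightarrow> e = w y) \<and> (R d (v y) \<longleftrightarrow> S e (w y))" if "y \<noteq> u" for y
    using u[of y] that e(2-5) by auto
  have "same_atomic_type R S (v(u := d)) (w(u := e))"
    unfolding same_atomic_type_def
  proof (intro allI)
    fix x y
    show "((v(u := d)) x = (v(u := d)) y \<longleftrightarrow> (w(u := e)) x = (w(u := e)) y) \<and>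
        (R ((v(u := d)) x) ((v(u := d)) y) \<longleftrightarrow> S ((w(u := e)) x) ((w(u := e)) y))"
    proof (cases "x = u"; cases "y = u")
      assume "x = u" "y = u"
      then show ?thesis
        using irreflpD[OF assms(2)] irreflpD[OF assms(4)] by simp
    next
      assume "x = u" "y \<noteq> u"
      then show ?thesis
        using new_vs_old[of y] by simp
    next
      assume "x \<noteq> u" "y = u"
      moreover have "R (v x) d \<longleftrightarrow> R d (v x)" "S (w x) e \<longleftrightarrow> S e (w x)"
        using assms(1,3) by (blast dest: sympD)+
      ultimately show ?thesis
        using new_vs_old[of x] by auto
    next
      assume "x \<noteq> u" "y \<noteq> u"
      then show ?thesis
        using vw(1) unfolding same_atomic_type_def by simp
    qed
  qed
  with e(1) show ?thesis by blast
qed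

lemma symp_Tr: "symp Tr" and symp_Zr: "symp Zr"
  unfolding symp_def Tr_def Zr_def by auto

lemma irreflp_Tr: "irreflp Tr" and irreflp_Zr: "irreflp Zr"
  unfolding irreflp_def Tr_def Zr_def by (auto simp: mod_Suc)

lemma cycle4_cycle5_two_point_extension:
  "\<forall>a\<in>Q. \<forall>b\<in>Q. \<forall>a'\<in>P. \<forall>b'\<in>P. (a = b \<longleftrightarrow> a' = b') \<longrightarrow> (Tr a b \<longleftrightarrow> Zr a' b') \<longrightarrow>
    (\<forall>d\<in>Q. \<exists>e\<in>P. (d = a \<longleftrightarrow> e = a') \<and> (d = b \<longleftrightarrow> e = b') \<and>
       (Tr d a \<longleftrightarrow> Zr e a') \<and> (Tr d b \<longleftrightarrow> Zr e b'))"
  by (simp add: P_def Q_def Tr_def Zr_def)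

lemma alike_imp_same_atomic_type: "alike v w \<Longrightarrow> same_atomic_type Tr Zr v w"
  unfolding alike_def same_atomic_type_def bij_betw_def inj_on_def by (metis rangeI)

theorem mainTheorem4:
  fixes \<psi> :: efm and v w :: "var \<Rightarrow> nat"
  assumes "\<forall>u. v u \<in> Q" and "\<forall>u. w u \<in> P"
    and "alike v w"
    and "sat Q Tr \<psi> v"
  shows "sat P Zr \<psi> w"
proof (rule sat_transfer)
  show "\<exists>e\<in>P. same_atomic_type Tr Zr (v'(u := d)) (w'(u := e))"
    if "same_atomic_type Tr Zr v' w'" "range v' \<subseteq> Q" "range w' \<subseteq> P" "d \<in> Q" for v' w' u d
    using forth_from_two_point_extension[OF symp_Tr irreflp_Tr symp_Zr irreflp_Zr _ that]
      cycle4_cycle5_two_point_extension by blast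
  show "same_atomic_type Tr Zr v w"
    using assms(3) by (rule alike_imp_same_atomic_type)
qed (use assms(1,2,4) in auto)

end
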